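(* For every integer $n\ge 1$, $r(2,n)=(2^n+1)(2^{n-1}+1)/3$.
   Context: For $n\ge 1$, $r(2,n)$ denotes the number of orbits of the left action of $\mathrm{SL}(2,\mathbb{Z})$ on $(\mathbb{Z}_2\times\mathbb{Z}_2)^n$, where elements of $(\mathbb{Z}_2\times\mathbb{Z}_2)^n$ are viewed as $2\times n$ matrices over $\mathbb{Z}_2$ and a matrix in $\mathrm{SL}(2,\mathbb{Z})$ acts by left matrix multiplication with entries reduced modulo $2$. *)

theory Defs
  imports Complex_Main
begin

text \<open>Elements of (Z_2 x Z_2)^n viewed as 2 x n matrices over Z_2:
  functions M :: nat => nat => int with entries in {0,1} at positions (i,j), i<2, j<n,
  and 0 outside (extensional representation).\<close>
definition Z2mats :: "nat \<Rightarrow> (nat \<Rightarrow> nat \<Rightarrow> int) set" where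
  "Z2mats n = {M. (\<forall>i j. i < 2 \<and> j < n \<longrightarrow> M i j \<in> {0, 1})
                 \<and> (\<forall>i j. \<not> (i < 2 \<and> j < n) \<longrightarrow> M i j = 0)}"

definition SL2Z :: "(nat \<Rightarrow> nat \<Rightarrow> int) set" where
  "SL2Z = {g. g 0 0 * g 1 1 - g 0 1 * g 1 0 = 1
              \<and> (\<forall>i j. \<not> (i < 2 \<and> j < 2) \<longrightarrow> g i j = 0)}"

definition act :: "nat \<Rightarrow> (nat \<Rightarrow> nat \<Rightarrow> int) \<Rightarrow> (nat \<Rightarrow> nat \<Rightarrow> int) \<Rightarrow> (nat \<Rightarrow> nat \<Rightarrow> int)" where
  "act n g M = (\<lambda>i j. if i < 2 \<and> j < n then (\<Sum>k<2. g i k * M k j) mod 2 else 0)"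

definition orbit_rel :: "nat \<Rightarrow> ((nat \<Rightarrow> nat \<Rightarrow> int) \<times> (nat \<Rightarrow> nat \<Rightarrow> int)) set" where
  "orbit_rel n = {(M, N). M \<in> Z2mats n \<and> N \<in> Z2mats n \<and> (\<exists>g \<in> SL2Z. act n g M = N)}"

definition r2 :: "nat \<Rightarrow> nat" where
  "r2 n = card (Z2mats n // orbit_rel n)"

end

theory Submission
  imports Defs "HOL-Algebra.Group_Action"
begin

text \<open>Since a matrix acts on each column of \<open>M\<close> separately and only through its entries modulo 2,
  the action of \<open>SL(2,\<int>)\<close> factors through its reduction \<open>SL(2,\<int>) \<rightarrow> GL(2,\<int>\<^sub>2)\<close>, which is onto.
  By Burnside's lemma the number of orbits is the average number of fixed points of the six
  elements of \<open>GL(2,\<int>\<^sub>2)\<close>. A matrix fixes \<open>M\<close> iff it fixes every column, so it has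
  \<open>f\<^sup>n\<close> fixed points where \<open>f\<close> is the number of its fixed vectors in \<open>\<int>\<^sub>2\<^sup>2\<close>: the identity fixes
  4 vectors, the three involutions 2 each and the two elements of order 3 only the zero vector.
  Hence \<open>r(2,n) = (4\<^sup>n + 3\<cdot>2\<^sup>n + 2)/6 = (2\<^sup>n + 1)(2\<^sup>n + 2)/6\<close>.\<close>

definition mat2 :: "int \<Rightarrow> int \<Rightarrow> int \<Rightarrow> int \<Rightarrow> (nat \<Rightarrow> nat \<Rightarrow> int)" where
  "mat2 a b c d = (\<lambda>i j. if i = 0 \<and> j = 0 then a else if i = 0 \<and> j = 1 then b
                        else if i = 1 \<and> j = 0 then c else if i = 1 \<and> j = 1 then d else 0)"

lemma mat2_simps [simp]:
  "mat2 a b c d 0 0 = a" "mat2 a b c d 0 1 = b" "mat2 a b c d 1 0 = c" "mat2 a b c d 1 1 = d"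
  "mat2 a b c d 0 (Suc 0) = b" "mat2 a b c d (Suc 0) 0 = c" "mat2 a b c d (Suc 0) (Suc 0) = d"
  by (simp_all add: mat2_def)

lemma mat2_eq_iff [simp]:
  "mat2 a b c d = mat2 a' b' c' d' \<longleftrightarrow> a = a' \<and> b = b' \<and> c = c' \<and> d = d'"
proof
  assume "mat2 a b c d = mat2 a' b' c' d'"
  then have "mat2 a b c d i j = mat2 a' b' c' d' i j" for i j
    by simp
  from this[of 0 0] this[of 0 1] this[of 1 0] this[of 1 1]
  show "a = a' \<and> b = b' \<and> c = c' \<and> d = d'"
    by simp
qed simp

definition mult_mod2 :: "(nat \<Rightarrow> nat \<Rightarrow> int) \<Rightarrow> (nat \<Rightarrow> nat \<Rightarrow> int) \<Rightarrow> (nat \<Rightarrow> nat \<Rightarrow> int)" where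
  "mult_mod2 g h = (\<lambda>i j. if i < 2 \<and> j < 2 then (\<Sum>k<2. g i k * h k j) mod 2 else 0)"

lemma sum_lessThan_2: "(\<Sum>k<(2::nat). f k) = f 0 + (f 1 :: int)"
  by (simp add: numeral_2_eq_2)

lemma mult_mod2_mat2:
  "mult_mod2 (mat2 a b c d) (mat2 e f g h)
     = mat2 ((a*e + b*g) mod 2) ((a*f + b*h) mod 2) ((c*e + d*g) mod 2) ((c*f + d*h) mod 2)"
proof (intro ext)
  fix i j :: nat
  have "i = 0 \<or> i = 1 \<or> i \<ge> 2" "j = 0 \<or> j = 1 \<or> j \<ge> 2" by auto
  then show "mult_mod2 (mat2 a b c d) (mat2 e f g h) i j
      = mat2 ((a*e + b*g) mod 2) ((a*f + b*h) mod 2) ((c*e + d*g) mod 2) ((c*f + d*h) mod 2) i j"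
    by (elim disjE) (simp_all add: mult_mod2_def mat2_def sum_lessThan_2)
qed

lemma mod2_linear_combination:
  "((a :: int) * (x mod 2) + b * (y mod 2)) mod 2 = (a*x + b*y) mod 2"
  "((x :: int) mod 2 * a + y mod 2 * b) mod 2 = (x*a + y*b) mod 2"
  by (rule mod_add_cong; simp add: mod_mult_right_eq mod_mult_left_eq)+

lemma mod2_product_assoc:
  "((g0 :: int) * ((h00*m0 + h01*m1) mod 2) + g1 * ((h10*m0 + h11*m1) mod 2)) mod 2
     = (((g0*h00 + g1*h10) mod 2) * m0 + ((g0*h01 + g1*h11) mod 2) * m1) mod 2"
proof -
  have "(g0 * ((h00*m0 + h01*m1) mod 2) + g1 * ((h10*m0 + h11*m1) mod 2)) mod 2
      = (g0 * (h00*m0 + h01*m1) + g1 * (h10*m0 + h11*m1)) mod 2"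
    by (rule mod2_linear_combination(1))
  also have "\<dots> = ((g0*h00 + g1*h10) * m0 + (g0*h01 + g1*h11) * m1) mod 2"
    by (simp add: algebra_simps)
  also have "\<dots> = (((g0*h00 + g1*h10) mod 2) * m0 + ((g0*h01 + g1*h11) mod 2) * m1) mod 2"
    by (rule mod2_linear_combination(2)[symmetric])
  finally show ?thesis .
qed

lemma mult_mod2_assoc: "mult_mod2 (mult_mod2 x y) z = mult_mod2 x (mult_mod2 y z)"
proof (intro ext)
  fix i j :: nat
  show "mult_mod2 (mult_mod2 x y) z i j = mult_mod2 x (mult_mod2 y z) i j"
  proof (cases "i < 2 \<and> j < 2")
    case True
    then show ?thesis
      unfolding mult_mod2_def
      by (simp only: sum_lessThan_2 if_True simp_thms zero_less_numeral one_less_numeral_iff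
          semiring_norm mod2_product_assoc)
  qed (auto simp add: mult_mod2_def)
qed

subsection \<open>The group \<open>GL(2,\<int>\<^sub>2)\<close>\<close>

definition GL2_mod2 :: "(nat \<Rightarrow> nat \<Rightarrow> int) set" where
  "GL2_mod2 = {mat2 1 0 0 1, mat2 0 1 1 0, mat2 1 1 0 1, mat2 1 0 1 1, mat2 1 1 1 0, mat2 0 1 1 1}"

definition GL2_mod2_group :: "(nat \<Rightarrow> nat \<Rightarrow> int) monoid" where
  "GL2_mod2_group = \<lparr>carrier = GL2_mod2, mult = mult_mod2, one = mat2 1 0 0 1\<rparr>"

lemma card_GL2_mod2: "card GL2_mod2 = 6"
  by (simp add: GL2_mod2_def)

lemma mult_mod2_GL2_mod2: "g \<in> GL2_mod2 \<Longrightarrow> h \<in> GL2_mod2 \<Longrightarrow> mult_mod2 g h \<in> GL2_mod2"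
  unfolding GL2_mod2_def by (elim insertE emptyE; simp add: mult_mod2_mat2)

lemma mult_mod2_one_left: "g \<in> GL2_mod2 \<Longrightarrow> mult_mod2 (mat2 1 0 0 1) g = g"
  unfolding GL2_mod2_def by (elim insertE emptyE; simp add: mult_mod2_mat2)

lemma GL2_mod2_inverse:
  "g \<in> GL2_mod2 \<Longrightarrow> \<exists>h\<in>GL2_mod2. mult_mod2 h g = mat2 1 0 0 1 \<and> mult_mod2 g h = mat2 1 0 0 1"
  unfolding GL2_mod2_def by (elim insertE emptyE; simp add: mult_mod2_mat2)

lemma group_GL2_mod2: "group GL2_mod2_group"
proof (rule groupI)
  show "\<exists>h\<in>carrier GL2_mod2_group. h \<otimes>\<^bsub>GL2_mod2_group\<^esub> g = \<one>\<^bsub>GL2_mod2_group\<^esub>"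
    if "g \<in> carrier GL2_mod2_group" for g
    using that GL2_mod2_inverse by (fastforce simp: GL2_mod2_group_def)
qed (simp_all add: GL2_mod2_group_def mult_mod2_assoc mult_mod2_GL2_mod2 mult_mod2_one_left,
     simp add: GL2_mod2_def)

subsection \<open>The action on \<open>2\<times>n\<close> matrices\<close>

lemma act_act: "act n g (act n h M) = act n (mult_mod2 g h) M"
proof (intro ext)
  fix i j :: nat
  show "act n g (act n h M) i j = act n (mult_mod2 g h) M i j"
  proof (cases "i < 2 \<and> j < n")
    case True
    then show ?thesis
      unfolding act_def mult_mod2_def
      by (simp only: sum_lessThan_2 if_True simp_thms zero_less_numeral one_less_numeral_iff
          semiring_norm mod2_product_assoc)
  qed (auto simp add: act_def)
qed

lemma Z2mats_entries:
  assumes "M \<in> Z2mats n"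
  shows "i < 2 \<Longrightarrow> j < n \<Longrightarrow> M i j = 0 \<or> M i j = 1"
    and "\<not> (i < 2 \<and> j < n) \<Longrightarrow> M i j = 0"
  using assms by (auto simp: Z2mats_def)

lemma act_in_Z2mats: "act n g M \<in> Z2mats n"
proof -
  have "x mod 2 = 0 \<or> x mod 2 = 1" for x :: int
    by auto
  then show ?thesis
    by (auto simp: Z2mats_def act_def)
qed

lemma act_identity: "M \<in> Z2mats n \<Longrightarrow> act n (mat2 1 0 0 1) M = M"
proof (intro ext)
  fix i j :: nat
  assume M: "M \<in> Z2mats n"
  show "act n (mat2 1 0 0 1) M i j = M i j"
  proof (cases "i < 2 \<and> j < n")
    case True
    then have "i = 0 \<or> i = 1" "M i j = 0 \<or> M i j = 1"
      using Z2mats_entries(1)[OF M] by auto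
    then show ?thesis
      using True by (auto simp: act_def sum_lessThan_2)
  qed (auto simp add: act_def Z2mats_entries(2)[OF M])
qed

lemma act_cong_mod2:
  assumes "\<And>i k. i < 2 \<Longrightarrow> k < 2 \<Longrightarrow> g i k mod 2 = g' i k mod 2"
  shows "act n g = act n g'"
proof (intro ext)
  fix M i j
  show "act n g M i j = act n g' M i j"
  proof (cases "i < 2 \<and> j < n")
    case True
    have "(g i 0 * M 0 j + g i 1 * M 1 j) mod 2 = (g i 0 mod 2 * M 0 j + g i 1 mod 2 * M 1 j) mod 2"
      by (rule mod2_linear_combination(2)[symmetric])
    also have "\<dots> = (g' i 0 mod 2 * M 0 j + g' i 1 mod 2 * M 1 j) mod 2"
      using assms True by simp
    also have "\<dots> = (g' i 0 * M 0 j + g' i 1 * M 1 j) mod 2"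
      by (rule mod2_linear_combination(2))
    finally show ?thesis
      using True by (simp add: act_def sum_lessThan_2)
  qed (auto simp add: act_def)
qed

definition act_perm :: "nat \<Rightarrow> (nat \<Rightarrow> nat \<Rightarrow> int) \<Rightarrow> (nat \<Rightarrow> nat \<Rightarrow> int) \<Rightarrow> (nat \<Rightarrow> nat \<Rightarrow> int)" where
  "act_perm n g = restrict (act n g) (Z2mats n)"

lemma act_perm_Bij:
  assumes "g \<in> GL2_mod2"
  shows "act_perm n g \<in> Bij (Z2mats n)"
proof -
  obtain h where inverse: "mult_mod2 h g = mat2 1 0 0 1" "mult_mod2 g h = mat2 1 0 0 1"
    using GL2_mod2_inverse[OF assms] by blast
  have "bij_betw (act n g) (Z2mats n) (Z2mats n)"
    by (rule bij_betw_byWitness[where f' = "act n h"])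
       (auto simp: act_act inverse act_identity act_in_Z2mats)
  then have "bij_betw (act_perm n g) (Z2mats n) (Z2mats n)"
    unfolding act_perm_def by (rule iffD2[OF bij_betw_cong, rotated]) auto
  then show ?thesis
    unfolding Bij_def act_perm_def by auto
qed

lemma group_action_GL2_mod2: "group_action GL2_mod2_group (Z2mats n) (act_perm n)"
  unfolding group_action_def group_hom_def group_hom_axioms_def
proof (intro conjI homI)
  show "group GL2_mod2_group"
    by (rule group_GL2_mod2)
  show "group (BijGroup (Z2mats n))"
    by (rule group_BijGroup)
  show "act_perm n g \<in> carrier (BijGroup (Z2mats n))" if "g \<in> carrier GL2_mod2_group" for g
    using that act_perm_Bij by (simp add: GL2_mod2_group_def BijGroup_def)
  show "act_perm n (g \<otimes>\<^bsub>GL2_mod2_group\<^esub> h) = act_perm n g \<otimes>\<^bsub>BijGroup (Z2mats n)\<^esub> act_perm n h"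
    if "g \<in> carrier GL2_mod2_group" "h \<in> carrier GL2_mod2_group" for g h
    using that act_perm_Bij
    by (auto simp: GL2_mod2_group_def BijGroup_def compose_def act_perm_def act_act act_in_Z2mats fun_eq_iff)
qed

subsection \<open>Reduction of \<open>SL(2,\<int>)\<close> modulo 2\<close>

lemma mat2_in_GL2_mod2:
  assumes "a \<in> {0, 1}" "b \<in> {0, 1}" "c \<in> {0, 1}" "d \<in> {0, 1}" "(a*d - b*c) mod 2 = 1"
  shows "mat2 a b c d \<in> GL2_mod2"
  using assms unfolding GL2_mod2_def by (elim insertE emptyE) simp_all

lemma SL2Z_act_eq_GL2_mod2_act:
  assumes "g \<in> SL2Z"
  shows "\<exists>c\<in>GL2_mod2. act n g = act n c"
proof -
  define a b c d where "a = g 0 0 mod 2" "b = g 0 1 mod 2" "c = g 1 0 mod 2" "d = g 1 1 mod 2"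
  have "(a*d - b*c) mod 2 = (g 0 0 * g 1 1 - g 0 1 * g 1 0) mod 2"
    unfolding a_b_c_d_def by (rule mod_diff_cong; simp add: mod_mult_eq)
  also have "\<dots> = 1"
    using assms by (simp add: SL2Z_def)
  finally have "(a*d - b*c) mod 2 = 1" .
  moreover have "a \<in> {0, 1}" "b \<in> {0, 1}" "c \<in> {0, 1}" "d \<in> {0, 1}"
    unfolding a_b_c_d_def by auto
  ultimately have "mat2 a b c d \<in> GL2_mod2"
    by (rule mat2_in_GL2_mod2[rotated 4])
  moreover have "act n g = act n (mat2 a b c d)"
    by (rule act_cong_mod2) (auto simp: a_b_c_d_def mat2_def less_2_cases_iff)
  ultimately show ?thesis
    by blast
qed

lemma GL2_mod2_lifts_to_SL2Z:
  assumes "c \<in> GL2_mod2"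
  shows "\<exists>g\<in>SL2Z. act n g = act n c"
proof -
  have "\<exists>a b c' d. a*d - b*c' = 1 \<and> act n (mat2 a b c' d) = act n c"
    using assms unfolding GL2_mod2_def
  proof (elim insertE emptyE)
    show "c = mat2 1 0 0 1 \<Longrightarrow> ?thesis"
      by (intro exI[of _ 1] exI[of _ 0] exI[of _ 0] exI[of _ 1]) simp
    show "c = mat2 0 1 1 0 \<Longrightarrow> ?thesis"
      by (intro exI[of _ 0] exI[of _ 1] exI[of _ "-1"] exI[of _ 0])
         (auto intro!: act_cong_mod2 simp: mat2_def)
    show "c = mat2 1 1 0 1 \<Longrightarrow> ?thesis"
      by (intro exI[of _ 1] exI[of _ 1] exI[of _ 0] exI[of _ 1]) simp
    show "c = mat2 1 0 1 1 \<Longrightarrow> ?thesis"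
      by (intro exI[of _ 1] exI[of _ 0] exI[of _ 1] exI[of _ 1]) simp
    show "c = mat2 1 1 1 0 \<Longrightarrow> ?thesis"
      by (intro exI[of _ 1] exI[of _ 1] exI[of _ "-1"] exI[of _ 0])
         (auto intro!: act_cong_mod2 simp: mat2_def)
    show "c = mat2 0 1 1 1 \<Longrightarrow> ?thesis"
      by (intro exI[of _ 0] exI[of _ 1] exI[of _ "-1"] exI[of _ 1])
         (auto intro!: act_cong_mod2 simp: mat2_def)
  qed
  moreover have "a*d - b*c' = 1 \<Longrightarrow> mat2 a b c' d \<in> SL2Z" for a b c' d
    by (simp add: SL2Z_def mat2_def)
  ultimately show ?thesis
    by blast
qed

lemma orbit_rel_Image_eq_orbit:
  assumes "M \<in> Z2mats n"
  shows "orbit_rel n `` {M} = orbit GL2_mod2_group (act_perm n) M"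
proof -
  have "(\<exists>g\<in>SL2Z. act n g M = N) \<longleftrightarrow> (\<exists>c\<in>GL2_mod2. act n c M = N)" for N
  proof
    assume "\<exists>g\<in>SL2Z. act n g M = N"
    then obtain g where "g \<in> SL2Z" "act n g M = N"
      by blast
    moreover obtain c where "c \<in> GL2_mod2" "act n g = act n c"
      using SL2Z_act_eq_GL2_mod2_act[OF \<open>g \<in> SL2Z\<close>] by blast
    ultimately show "\<exists>c\<in>GL2_mod2. act n c M = N"
      by (metis)
  next
    assume "\<exists>c\<in>GL2_mod2. act n c M = N"
    then obtain c where "c \<in> GL2_mod2" "act n c M = N"
      by blast
    moreover obtain g where "g \<in> SL2Z" "act n g = act n c"
      using GL2_mod2_lifts_to_SL2Z[OF \<open>c \<in> GL2_mod2\<close>] by blast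
    ultimately show "\<exists>g\<in>SL2Z. act n g M = N"
      by (metis)
  qed
  then show ?thesis
    using assms act_in_Z2mats
    by (auto simp: orbit_rel_def orbit_def GL2_mod2_group_def act_perm_def)
qed

lemma quotient_orbit_rel_eq_orbits:
  "Z2mats n // orbit_rel n = orbits GL2_mod2_group (Z2mats n) (act_perm n)"
  unfolding quotient_def orbits_def using orbit_rel_Image_eq_orbit by auto

subsection \<open>Fixed points\<close>

definition fixed_vectors :: "(nat \<Rightarrow> nat \<Rightarrow> int) \<Rightarrow> (int \<times> int) set" where
  "fixed_vectors c = {(x, y). x \<in> {0, 1} \<and> y \<in> {0, 1}
     \<and> (c 0 0 * x + c 0 1 * y) mod 2 = x \<and> (c 1 0 * x + c 1 1 * y) mod 2 = y}"

lemma act_fixed_iff_columns_fixed: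
  assumes M: "M \<in> Z2mats n"
  shows "act n c M = M \<longleftrightarrow> (\<forall>j<n. (M 0 j, M 1 j) \<in> fixed_vectors c)"
proof
  assume fixed: "act n c M = M"
  show "\<forall>j<n. (M 0 j, M 1 j) \<in> fixed_vectors c"
  proof (intro allI impI)
    fix j
    assume "j < n"
    moreover have "act n c M 0 j = M 0 j" "act n c M 1 j = M 1 j"
      using fixed by auto
    moreover have "M 0 j \<in> {0, 1}" "M 1 j \<in> {0, 1}"
      using Z2mats_entries(1)[OF M _ \<open>j < n\<close>] by auto
    ultimately show "(M 0 j, M 1 j) \<in> fixed_vectors c"
      by (simp add: act_def fixed_vectors_def sum_lessThan_2)
  qed
next
  assume columns_fixed: "\<forall>j<n. (M 0 j, M 1 j) \<in> fixed_vectors c"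
  show "act n c M = M"
  proof (intro ext)
    fix i j :: nat
    show "act n c M i j = M i j"
    proof (cases "i < 2 \<and> j < n")
      case True
      then have "i = 0 \<or> i = 1"
        by auto
      then show ?thesis
        using columns_fixed True by (auto simp: act_def fixed_vectors_def sum_lessThan_2)
    qed (auto simp: act_def Z2mats_entries(2)[OF M])
  qed
qed

definition columns :: "nat \<Rightarrow> (nat \<Rightarrow> nat \<Rightarrow> int) \<Rightarrow> nat \<Rightarrow> int \<times> int" where
  "columns n M = (\<lambda>j\<in>{..<n}. (M 0 j, M 1 j))"

definition of_columns :: "nat \<Rightarrow> (nat \<Rightarrow> int \<times> int) \<Rightarrow> nat \<Rightarrow> nat \<Rightarrow> int" where
  "of_columns n f = (\<lambda>i j. if i < 2 \<and> j < n then (if i = 0 then fst (f j) else snd (f j)) else 0)"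

lemma of_columns_columns:
  assumes M: "M \<in> Z2mats n"
  shows "of_columns n (columns n M) = M"
proof (intro ext)
  fix i j :: nat
  show "of_columns n (columns n M) i j = M i j"
  proof (cases "i < 2 \<and> j < n")
    case True
    then have "i = 0 \<or> i = 1"
      by auto
    then show ?thesis
      using True by (auto simp: of_columns_def columns_def)
  qed (auto simp: of_columns_def Z2mats_entries(2)[OF M])
qed

lemma columns_of_columns:
  assumes "f \<in> {..<n} \<rightarrow>\<^sub>E S"
  shows "columns n (of_columns n f) = f"
proof (intro ext)
  fix j
  show "columns n (of_columns n f) j = f j"
    using PiE_arb[OF assms, of j] by (simp add: of_columns_def columns_def)
qed

lemma bij_betw_columns:
  assumes "S \<subseteq> {0, 1} \<times> {0, 1}"
  shows "bij_betw (columns n) {M \<in> Z2mats n. \<forall>j<n. (M 0 j, M 1 j) \<in> S} ({..<n} \<rightarrow>\<^sub>E S)"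
proof (rule bij_betw_byWitness[where f' = "of_columns n"])
  show "columns n ` {M \<in> Z2mats n. \<forall>j<n. (M 0 j, M 1 j) \<in> S} \<subseteq> {..<n} \<rightarrow>\<^sub>E S"
    unfolding columns_def by (intro image_subsetI) (simp add: restrict_PiE_iff)
  show "of_columns n ` ({..<n} \<rightarrow>\<^sub>E S) \<subseteq> {M \<in> Z2mats n. \<forall>j<n. (M 0 j, M 1 j) \<in> S}"
  proof (intro image_subsetI CollectI conjI)
    fix f
    assume f: "f \<in> {..<n} \<rightarrow>\<^sub>E S"
    then have "fst (f j) \<in> {0, 1} \<and> snd (f j) \<in> {0, 1}" if "j < n" for j
      using assms that by fastforce
    then show "of_columns n f \<in> Z2mats n"
      by (auto simp: Z2mats_def of_columns_def)
    show "\<forall>j<n. (of_columns n f 0 j, of_columns n f 1 j) \<in> S"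
      using f by (auto simp: of_columns_def)
  qed
qed (simp_all add: of_columns_columns columns_of_columns)

lemma card_fixed_points: "card {M \<in> Z2mats n. act n c M = M} = card (fixed_vectors c) ^ n"
proof -
  have "{M \<in> Z2mats n. act n c M = M} = {M \<in> Z2mats n. \<forall>j<n. (M 0 j, M 1 j) \<in> fixed_vectors c}"
    using act_fixed_iff_columns_fixed by blast
  moreover have "fixed_vectors c \<subseteq> {0, 1} \<times> {0, 1}"
    by (auto simp: fixed_vectors_def)
  ultimately show ?thesis
    using bij_betw_same_card[OF bij_betw_columns] card_funcsetE[of "{..<n}"] by simp
qed

lemma finite_Z2mats: "finite (Z2mats n)"
proof -
  have "Z2mats n = {M \<in> Z2mats n. \<forall>j<n. (M 0 j, M 1 j) \<in> {0, 1} \<times> {0, 1}}"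
    by (auto simp: Z2mats_def)
  then show ?thesis
    using bij_betw_finite[OF bij_betw_columns[of "{0, 1} \<times> {0, 1}" n]] by (simp add: finite_PiE)
qed

lemma fixed_vectors_eq_filter:
  "fixed_vectors c = set (filter (\<lambda>(x, y). (c 0 0 * x + c 0 1 * y) mod 2 = x
     \<and> (c 1 0 * x + c 1 1 * y) mod 2 = y) [(0, 0), (0, 1), (1, 0), (1, 1)])"
  by (auto simp: fixed_vectors_def)

lemma card_fixed_vectors:
  "card (fixed_vectors (mat2 1 0 0 1)) = 4"
  "card (fixed_vectors (mat2 0 1 1 0)) = 2"
  "card (fixed_vectors (mat2 1 1 0 1)) = 2"
  "card (fixed_vectors (mat2 1 0 1 1)) = 2"
  "card (fixed_vectors (mat2 1 1 1 0)) = 1"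
  "card (fixed_vectors (mat2 0 1 1 1)) = 1"
  by (simp_all add: fixed_vectors_eq_filter)

lemma card_orbits_times_6: "card (Z2mats n // orbit_rel n) * 6 = 4 ^ n + 3 * 2 ^ n + 2"
proof -
  interpret group_action GL2_mod2_group "Z2mats n" "act_perm n"
    by (rule group_action_GL2_mod2)
  have "invariants (Z2mats n) (act_perm n) c = {M \<in> Z2mats n. act n c M = M}" for c
    by (auto simp: invariants_def act_perm_def)
  then have "(\<Sum>c\<in>GL2_mod2. card (invariants (Z2mats n) (act_perm n) c)) = 4 ^ n + 3 * 2 ^ n + 2"
    by (simp add: GL2_mod2_def card_fixed_points card_fixed_vectors)
  moreover have "card (orbits GL2_mod2_group (Z2mats n) (act_perm n)) * order GL2_mod2_group
      = (\<Sum>c\<in>GL2_mod2. card (invariants (Z2mats n) (act_perm n) c))"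
    using burnside finite_Z2mats by (simp add: GL2_mod2_group_def GL2_mod2_def)
  ultimately show ?thesis
    by (simp add: quotient_orbit_rel_eq_orbits order_def GL2_mod2_group_def card_GL2_mod2)
qed

theorem corollary4p4:
  fixes n :: nat
  assumes "n \<ge> 1"
  shows "real (r2 n) = (2 ^ n + 1 :: real) * (2 ^ (n - 1) + 1) / 3"
proof -
  obtain m where n: "n = Suc m"
    using assms by (cases n) auto
  have "real (r2 n) * 6 = 4 ^ n + 3 * 2 ^ n + 2"
    using arg_cong[OF card_orbits_times_6[of n], of real] by (simp add: r2_def)
  moreover have "(4 :: real) ^ n = 4 * 2 ^ m * 2 ^ m"
    by (simp add: n power_mult_distrib[symmetric])
  ultimately show ?thesis
    by (simp add: n field_simps)
qed

end
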